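(* For any vector $\vec\lambda=(\lambda_1,\dots,\lambda_n)\in\mathbb{R}^n$ and any $\vec a=(a_1,\dots,a_n)\in\mathbb{R}^n$ with $|\vec a|=1$, $$\Big|\sum_{i=1}^n\lambda_i^2a_i^2-\Big(\sum_{i=1}^n\lambda_i\Big)\Big(\sum_{j=1}^n\lambda_ja_j^2\Big)-\frac12\Big[\sum_{i=1}^n\lambda_i^2-\Big(\sum_{i=1}^n\lambda_i\Big)^2\Big]\Big|\le\frac{n-2}{2}\Big[\sum_{i=1}^n\lambda_i^2-\sum_{i=1}^n\lambda_i^2a_i^2\Big].$$ *)

theory Defs
  imports "HOL-Analysis.Analysis"
begin

end

theory Submission
  imports Defs
begin

(* The weights w_i = a_i^2 form a probability vector, so c_ij = 1 - w_i - w_j is nonnegative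
   for i ~= j.  Twice the left-hand side equals the off-diagonal form
   sum_{i ~= j} c_ij lambda_i lambda_j, and twice the right-hand side equals
   sum_{i ~= j} c_ij lambda_i^2; since c is symmetric, |lambda_i lambda_j| <= (lambda_i^2 + lambda_j^2)/2
   bounds the former by the latter. *)

lemma abs_sum_sum_mult_le_sum_sum_square:
  fixes c :: "'a \<Rightarrow> 'a \<Rightarrow> real"
  assumes "finite S"
    and nonneg: "\<And>i j. i \<in> S \<Longrightarrow> j \<in> S \<Longrightarrow> 0 \<le> c i j"
    and sym: "\<And>i j. i \<in> S \<Longrightarrow> j \<in> S \<Longrightarrow> c i j = c j i"
  shows "\<bar>\<Sum>i\<in>S. \<Sum>j\<in>S. c i j * x i * x j\<bar> \<le> (\<Sum>i\<in>S. \<Sum>j\<in>S. c i j * (x i)^2)"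
proof -
  have termwise: "\<bar>c i j * x i * x j\<bar> \<le> (c i j * (x i)^2 + c j i * (x j)^2) / 2"
    if "i \<in> S" "j \<in> S" for i j
  proof -
    have "\<bar>x i * x j\<bar> \<le> ((x i)^2 + (x j)^2) / 2"
      using sum_squares_bound[of "\<bar>x i\<bar>" "\<bar>x j\<bar>"] by (simp add: abs_mult)
    then have "c i j * \<bar>x i * x j\<bar> \<le> c i j * (((x i)^2 + (x j)^2) / 2)"
      using nonneg[OF that] by (rule mult_left_mono)
    then show ?thesis
      using nonneg[OF that] sym[OF that] by (simp add: abs_mult algebra_simps add_divide_distrib)
  qed
  have "\<bar>\<Sum>i\<in>S. \<Sum>j\<in>S. c i j * x i * x j\<bar> \<le> (\<Sum>i\<in>S. \<Sum>j\<in>S. \<bar>c i j * x i * x j\<bar>)"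
    by (rule order_trans[OF sum_abs]) (intro sum_mono sum_abs)
  also have "\<dots> \<le> (\<Sum>i\<in>S. \<Sum>j\<in>S. (c i j * (x i)^2 + c j i * (x j)^2) / 2)"
    by (intro sum_mono termwise)
  also have "\<dots> = ((\<Sum>i\<in>S. \<Sum>j\<in>S. c i j * (x i)^2) + (\<Sum>i\<in>S. \<Sum>j\<in>S. c j i * (x j)^2)) / 2"
    by (simp add: sum.distrib add_divide_distrib flip: sum_divide_distrib)
  also have "\<dots> = (\<Sum>i\<in>S. \<Sum>j\<in>S. c i j * (x i)^2)"
    using sum.swap[of "\<lambda>i j. c j i * (x j)^2" S S] by simp
  finally show ?thesis .
qed

lemma sum_sum_off_diagonal:
  fixes f :: "'a \<Rightarrow> 'a \<Rightarrow> 'b :: ab_group_add"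
  assumes "finite S"
  shows "(\<Sum>i\<in>S. \<Sum>j\<in>S. if i = j then 0 else f i j) = (\<Sum>i\<in>S. \<Sum>j\<in>S. f i j) - (\<Sum>i\<in>S. f i i)"
proof -
  have "(\<Sum>j\<in>S. if i = j then 0 else f i j) = (\<Sum>j\<in>S. f i j) - f i i" if "i \<in> S" for i
    using assms that by (simp add: sum.If_cases sum_diff1 Diff_eq[symmetric] flip: Compl_eq_Diff_UNIV)
  then show ?thesis
    by (simp add: sum_subtractf)
qed

lemma sum_sum_off_diagonal_cross:
  fixes l w :: "'a \<Rightarrow> real"
  assumes "finite S"
  shows "(\<Sum>i\<in>S. \<Sum>j\<in>S. if i = j then 0 else (1 - w i - w j) * l i * l j)
       = 2 * ((\<Sum>i\<in>S. (l i)^2 * w i) - (\<Sum>i\<in>S. l i) * (\<Sum>j\<in>S. l j * w j)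
              - (1/2) * ((\<Sum>i\<in>S. (l i)^2) - (\<Sum>i\<in>S. l i)^2))"
proof -
  have "(1 - w i - w j) * l i * l j = l i * l j - (l i * w i) * l j - l i * (l j * w j)" for i j
    by (simp add: algebra_simps)
  then have full: "(\<Sum>i\<in>S. \<Sum>j\<in>S. (1 - w i - w j) * l i * l j)
      = (\<Sum>i\<in>S. l i)^2 - 2 * (\<Sum>i\<in>S. l i) * (\<Sum>j\<in>S. l j * w j)"
    by (simp add: sum_subtractf power2_eq_square flip: sum_product)
  have diagonal: "(\<Sum>i\<in>S. (1 - w i - w i) * l i * l i) = (\<Sum>i\<in>S. (l i)^2) - 2 * (\<Sum>i\<in>S. (l i)^2 * w i)"
    by (simp add: algebra_simps power2_eq_square sum_subtractf sum_distrib_left)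
  show ?thesis
    unfolding sum_sum_off_diagonal[OF assms] full diagonal by (simp add: algebra_simps)
qed

lemma sum_sum_off_diagonal_square:
  fixes l w :: "'a \<Rightarrow> real"
  assumes "finite S" and "sum w S = 1"
  shows "(\<Sum>i\<in>S. \<Sum>j\<in>S. if i = j then 0 else (1 - w i - w j) * (l i)^2)
       = (real (card S) - 2) * ((\<Sum>i\<in>S. (l i)^2) - (\<Sum>i\<in>S. (l i)^2 * w i))"
proof -
  have row: "(\<Sum>j\<in>S. (1 - w i - w j) * (l i)^2) - (1 - w i - w i) * (l i)^2
      = (real (card S) - 2) * ((l i)^2 - (l i)^2 * w i)" for i
  proof -
    have "(\<Sum>j\<in>S. (1 - w i - w j) * (l i)^2) = (real (card S) * (1 - w i) - 1) * (l i)^2"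
      using assms(2) by (simp add: sum_subtractf left_diff_distrib flip: sum_distrib_right)
    then show ?thesis by (simp add: algebra_simps)
  qed
  show ?thesis
    unfolding sum_sum_off_diagonal[OF assms(1)] sum_subtractf[symmetric] row
    by (simp add: sum_subtractf flip: sum_distrib_left)
qed

lemma lemma2p2_weighted:
  fixes l w :: "'a \<Rightarrow> real"
  assumes "finite S" and "\<And>i. i \<in> S \<Longrightarrow> 0 \<le> w i" and "sum w S = 1"
  shows "\<bar>(\<Sum>i\<in>S. (l i)^2 * w i) - (\<Sum>i\<in>S. l i) * (\<Sum>j\<in>S. l j * w j)
          - (1/2) * ((\<Sum>i\<in>S. (l i)^2) - (\<Sum>i\<in>S. l i)^2)\<bar>
        \<le> ((real (card S) - 2) / 2) * ((\<Sum>i\<in>S. (l i)^2) - (\<Sum>i\<in>S. (l i)^2 * w i))"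
proof -
  define c where "c i j = (if i = j then 0 else 1 - w i - w j)" for i j
  have "0 \<le> c i j" if "i \<in> S" "j \<in> S" for i j
  proof (cases "i = j")
    case False
    then have "w i + w j = sum w {i, j}" by simp
    also have "\<dots> \<le> sum w S"
      using assms that by (intro sum_mono2) auto
    finally show ?thesis using assms(3) by (simp add: c_def)
  qed (simp add: c_def)
  moreover have "c i j = c j i" for i j
    by (simp add: c_def)
  ultimately have "\<bar>\<Sum>i\<in>S. \<Sum>j\<in>S. c i j * l i * l j\<bar> \<le> (\<Sum>i\<in>S. \<Sum>j\<in>S. c i j * (l i)^2)"
    using assms(1) by (intro abs_sum_sum_mult_le_sum_sum_square)
  then show ?thesis
    unfolding c_def if_distrib if_distribR mult_zero_left
      sum_sum_off_diagonal_cross[OF assms(1)] sum_sum_off_diagonal_square[OF assms(1,3)]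
    by (simp only: abs_mult abs_numeral) (simp add: field_simps)
qed

theorem lemma2p2:
  fixes lam a :: "real ^ 'n"
  assumes "norm a = 1"
  shows "\<bar>(\<Sum>i\<in>UNIV. (lam $ i)^2 * (a $ i)^2)
            - (\<Sum>i\<in>UNIV. lam $ i) * (\<Sum>j\<in>UNIV. lam $ j * (a $ j)^2)
            - (1/2) * ((\<Sum>i\<in>UNIV. (lam $ i)^2) - (\<Sum>i\<in>UNIV. lam $ i)^2)\<bar>
         \<le> ((real CARD('n) - 2) / 2) *
            ((\<Sum>i\<in>UNIV. (lam $ i)^2) - (\<Sum>i\<in>UNIV. (lam $ i)^2 * (a $ i)^2))"
proof -
  have "(\<Sum>i\<in>UNIV. (a $ i)^2) = a \<bullet> a"
    by (simp add: inner_vec_def power2_eq_square)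
  also have "\<dots> = 1"
    using assms by (simp add: dot_square_norm)
  finally have "(\<Sum>i\<in>UNIV. (a $ i)^2) = 1" .
  then show ?thesis
    using lemma2p2_weighted[of UNIV "\<lambda>i. (a $ i)^2" "\<lambda>i. lam $ i"] by simp
qed

end
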